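(* For any $f\in\mathcal{C}(I)$ and integers $l,m\ge0$, $\operatorname{dist}\big(f,\mathcal{R}^\alpha_{l,m}(I)\big)\le\operatorname{dist}\big(f,\mathcal{R}_{l,m}(I)\big)$.
   Context: $I=[x_0,x_N]$ is a compact interval, $\mathcal{C}(I)$ the real continuous functions with sup norm, $\Delta=\{x_0<x_1<\dots<x_N\}$, $N\ge2$, a fixed partition, $I_i=[x_{i-1},x_i]$, $L_i(x)=a_ix+b_i$ the affine map of $I$ onto $I_i$ with $L_i(x_0)=x_{i-1}$, $L_i(x_N)=x_i$; $\alpha\in(-1,1)^N$ fixed. For $f,b\in\mathcal{C}(I)$ with $b(x_0)=f(x_0)$, $b(x_N)=f(x_N)$, $f^\alpha_{\Delta,b}$ is the unique $g\in\mathcal{C}(I)$ with $g(x)=f(x)+\alpha_i(g-b)(L_i^{-1}(x))$ for $x\in I_i$. $B_n$ is the Bernstein operator $B_nf(x)=\sum_{k=0}^n f\big(x_0+\tfrac kn(x_N-x_0)\big)\binom nk\frac{(x-x_0)^k(x_N-x)^{n-k}}{(x_N-x_0)^n}$, and $\mathcal{F}^\alpha_{\Delta,B_n}(f)=f^\alpha_{\Delta,B_nf}$. $\mathcal{P}_k(I)$ = real algebraic polynomials of degree $\le k$; $\mathcal{R}_{l,m}(I)=\{p/q:p\in\mathcal{P}_l(I),q\in\mathcal{P}_m(I),q>0\text{ on }I\}$; $\mathcal{R}^\alpha_{l,m}(I)=\{\mathcal{F}^\alpha_{\Delta,B_n}(r):r\in\mathcal{R}_{l,m}(I),n\in\mathbb{N}\}$;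 $\operatorname{dist}(f,S)=\inf\{\|f-s\|_\infty:s\in S\}$. *)

theory Defs
  imports "HOL-Analysis.Analysis" "HOL-Computational_Algebra.Polynomial"
begin

text \<open>Continuous functions on I = [xs 0, xs N] are represented as real => real functions
  continuous on I; only their values on I matter.\<close>

definition Ivl :: "(nat \<Rightarrow> real) \<Rightarrow> nat \<Rightarrow> real set" where
  "Ivl xs N = {xs 0 .. xs N}"

definition Lmap :: "(nat \<Rightarrow> real) \<Rightarrow> nat \<Rightarrow> nat \<Rightarrow> real \<Rightarrow> real" where
  "Lmap xs N i t = xs (i - 1) + (xs i - xs (i - 1)) / (xs N - xs 0) * (t - xs 0)"

definition Linv :: "(nat \<Rightarrow> real) \<Rightarrow> nat \<Rightarrow> nat \<Rightarrow> real \<Rightarrow> real" where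
  "Linv xs N i y = xs 0 + (xs N - xs 0) / (xs i - xs (i - 1)) * (y - xs (i - 1))"

text \<open>To make it unique as a HOL function we set it to 0 outside I.\<close>
definition fractal :: "(nat \<Rightarrow> real) \<Rightarrow> nat \<Rightarrow> (nat \<Rightarrow> real) \<Rightarrow> (real \<Rightarrow> real)
    \<Rightarrow> (real \<Rightarrow> real) \<Rightarrow> (real \<Rightarrow> real)" where
  "fractal xs N \<alpha> b f = (THE g. continuous_on (Ivl xs N) g
      \<and> (\<forall>i\<in>{1..N}. \<forall>x\<in>{xs (i - 1) .. xs i}.
           g x = f x + \<alpha> i * (g (Linv xs N i x) - b (Linv xs N i x)))
      \<and> (\<forall>x. x \<notin> Ivl xs N \<longrightarrow> g x = 0))"

definition bernstein :: "(nat \<Rightarrow> real) \<Rightarrow> nat \<Rightarrow> nat \<Rightarrow> (real \<Rightarrow> real) \<Rightarrow> real \<Rightarrow> real" where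
  "bernstein xs N n f x = (\<Sum>k=0..n. f (xs 0 + real k / real n * (xs N - xs 0))
      * real (n choose k) * (x - xs 0) ^ k * (xs N - x) ^ (n - k) / (xs N - xs 0) ^ n)"

definition fractal_op :: "(nat \<Rightarrow> real) \<Rightarrow> nat \<Rightarrow> (nat \<Rightarrow> real) \<Rightarrow> nat
    \<Rightarrow> (real \<Rightarrow> real) \<Rightarrow> (real \<Rightarrow> real)" where
  "fractal_op xs N \<alpha> n f = fractal xs N \<alpha> (bernstein xs N n f) f"

definition rat_fun :: "(nat \<Rightarrow> real) \<Rightarrow> nat \<Rightarrow> nat \<Rightarrow> nat \<Rightarrow> (real \<Rightarrow> real) set" where
  "rat_fun xs N l m = {(\<lambda>x. poly p x / poly q x) | p q.
      degree p \<le> l \<and> degree q \<le> m \<and> (\<forall>x\<in>Ivl xs N. poly q x > 0)}"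

definition frac_rat_fun :: "(nat \<Rightarrow> real) \<Rightarrow> nat \<Rightarrow> (nat \<Rightarrow> real) \<Rightarrow> nat \<Rightarrow> nat
    \<Rightarrow> (real \<Rightarrow> real) set" where
  "frac_rat_fun xs N \<alpha> l m = {fractal_op xs N \<alpha> n r | r n. r \<in> rat_fun xs N l m \<and> n \<ge> 1}"

definition supnorm_on :: "real set \<Rightarrow> (real \<Rightarrow> real) \<Rightarrow> real" where
  "supnorm_on S h = Sup ((\<lambda>x. \<bar>h x\<bar>) ` S)"

definition dist_on :: "real set \<Rightarrow> (real \<Rightarrow> real) \<Rightarrow> (real \<Rightarrow> real) set \<Rightarrow> real" where
  "dist_on S f A = Inf ((\<lambda>s. supnorm_on S (\<lambda>x. f x - s x)) ` A)"

end

theory Submission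
  imports Defs
begin

text \<open>
  The fractal function g of f with base b is the fixed point of a Read--Bajraktarevic operator
  that contracts with factor a = max |alpha i| < 1. Evaluating the functional equation at a
  maximum point of |g - f| gives |g - f| <= a (|g - f| + |f - b|) in sup norm, hence
  |g - f| <= |f - b| / (1 - a). For a rational r the Bernstein polynomials B_n r converge
  uniformly to r, so the fractal function of r with base B_n r approximates r arbitrarily well:
  every rational approximant of f is matched, up to any e > 0, by a fractal one.
\<close>

lemma ordered_nodes_less:
  fixes xs :: "nat \<Rightarrow> real"
  assumes "\<forall>i<N. xs i < xs (Suc i)" "i < j" "j \<le> N"
  shows "xs i < xs j"
  using assms(2,3)
proof (induction j)
  case (Suc j)
  then show ?case using assms(1)
    by (metis Suc_le_lessD less_Suc_eq less_trans order_less_imp_le)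
qed simp

lemma ordered_nodes_le:
  fixes xs :: "nat \<Rightarrow> real"
  assumes "\<forall>i<N. xs i < xs (Suc i)" "i \<le> j" "j \<le> N"
  shows "xs i \<le> xs j"
  using ordered_nodes_less[OF assms(1)] assms(2,3) by (cases "i = j") (auto intro: less_imp_le)

lemma bernstein_eq_Bernstein_sum:
  fixes xs :: "nat \<Rightarrow> real"
  assumes "xs 0 < xs N"
  shows "bernstein xs N n r x = (\<Sum>k\<le>n. r (xs 0 + (real k / real n) * (xs N - xs 0))
            * Bernstein n k ((x - xs 0) / (xs N - xs 0)))"
  unfolding bernstein_def atMost_atLeast0
proof (rule sum.cong[OF refl])
  fix k assume k: "k \<in> {0..n}"
  define D where "D = xs N - xs 0"
  have "D > 0" using assms D_def by simp
  then have compl: "1 - (x - xs 0) / D = (xs N - x) / D" by (simp add: field_simps D_def)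
  have split: "D ^ n = D ^ k * D ^ (n - k)" using k by (simp flip: power_add)
  show "r (xs 0 + real k / real n * (xs N - xs 0)) * real (n choose k) * (x - xs 0) ^ k *
         (xs N - x) ^ (n - k) / (xs N - xs 0) ^ n =
        r (xs 0 + real k / real n * (xs N - xs 0)) * Bernstein n k ((x - xs 0) / (xs N - xs 0))"
    unfolding D_def[symmetric] Bernstein_def compl split power_divide by simp
qed

lemma continuous_on_bernstein:
  fixes xs :: "nat \<Rightarrow> real"
  assumes "xs 0 < xs N"
  shows "continuous_on S (bernstein xs N n r)"
  unfolding bernstein_def using assms by (intro continuous_intros) auto

lemma bernstein_endpoints:
  fixes xs :: "nat \<Rightarrow> real"
  assumes "xs 0 < xs N" and "n \<ge> 1"
  shows "bernstein xs N n r (xs 0) = r (xs 0)" "bernstein xs N n r (xs N) = r (xs N)"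
proof -
  have "Bernstein n k 0 = (if k = 0 then 1 else 0)" for k by (simp add: Bernstein_def)
  then have "(\<Sum>k\<le>n. r (xs 0 + (real k / real n) * (xs N - xs 0)) * Bernstein n k 0)
      = (\<Sum>k\<le>n. if k = 0 then r (xs 0 + (real k / real n) * (xs N - xs 0)) else 0)"
    by (intro sum.cong) auto
  then show "bernstein xs N n r (xs 0) = r (xs 0)"
    unfolding bernstein_eq_Bernstein_sum[OF assms(1)] by simp
  have "Bernstein n k 1 = (if k = n then 1 else 0)" if "k \<le> n" for k
    using that by (simp add: Bernstein_def)
  then have "(\<Sum>k\<le>n. r (xs 0 + (real k / real n) * (xs N - xs 0)) * Bernstein n k 1)
      = (\<Sum>k\<le>n. if k = n then r (xs 0 + (real k / real n) * (xs N - xs 0)) else 0)"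
    by (intro sum.cong) auto
  then show "bernstein xs N n r (xs N) = r (xs N)"
    unfolding bernstein_eq_Bernstein_sum[OF assms(1)] using assms by simp
qed

lemma bernstein_uniform_approx:
  fixes xs :: "nat \<Rightarrow> real"
  assumes "xs 0 < xs N" and "continuous_on {xs 0 .. xs N} r" and "e > 0"
  obtains M where "\<And>n x. M \<le> n \<Longrightarrow> x \<in> {xs 0 .. xs N} \<Longrightarrow> \<bar>r x - bernstein xs N n r x\<bar> < e"
proof -
  define \<phi> where "\<phi> s = xs 0 + s * (xs N - xs 0)" for s
  have "\<phi> ` {0..1} \<subseteq> {xs 0..xs N}"
  proof clarify
    fix s :: real assume "s \<in> {0..1}"
    then have "0 \<le> s * (xs N - xs 0)" "s * (xs N - xs 0) \<le> 1 * (xs N - xs 0)"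
      using assms(1) by (auto intro: mult_right_mono)
    then show "\<phi> s \<in> {xs 0..xs N}" by (simp add: \<phi>_def)
  qed
  then have "continuous_on {0..1} (r \<circ> \<phi>)"
    by (intro continuous_on_compose continuous_on_subset[OF assms(2)])
       (auto simp: \<phi>_def intro!: continuous_intros)
  from Bernstein_Weierstrass[OF this assms(3)] obtain M where
    M: "\<And>n t. M \<le> n \<Longrightarrow> t \<in> {0..1} \<Longrightarrow>
          \<bar>(r \<circ> \<phi>) t - (\<Sum>k\<le>n. (r \<circ> \<phi>) (real k / real n) * Bernstein n k t)\<bar> < e"
    by blast
  show ?thesis
  proof (rule that)
    fix n x assume n: "M \<le> n" and x: "x \<in> {xs 0..xs N}"
    define t where "t = (x - xs 0) / (xs N - xs 0)"
    have t: "t \<in> {0..1}" using x assms(1) by (auto simp: t_def field_simps)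
    have "(r \<circ> \<phi>) t = r x" using assms(1) by (simp add: \<phi>_def t_def)
    moreover have "(r \<circ> \<phi>) (real k / real n) = r (xs 0 + real k / real n * (xs N - xs 0))" for k
      by (simp add: \<phi>_def)
    ultimately show "\<bar>r x - bernstein xs N n r x\<bar> < e"
      using M[OF n t] unfolding bernstein_eq_Bernstein_sum[OF assms(1)] t_def[symmetric] by simp
  qed
qed

lemma abs_le_by_self_contraction:
  fixes h :: "'a::topological_space \<Rightarrow> real"
  assumes "compact S" "continuous_on S h" "0 \<le> a" "a < 1"
    and step: "\<And>z. z \<in> S \<Longrightarrow> \<exists>w\<in>S. \<bar>h z\<bar> \<le> a * \<bar>h w\<bar> + c"
    and "x \<in> S"
  shows "\<bar>h x\<bar> \<le> c / (1 - a)"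
proof -
  have "continuous_on S (\<lambda>x. \<bar>h x\<bar>)" using assms(2) by (intro continuous_intros)
  then obtain z where z: "z \<in> S" and max: "\<And>y. y \<in> S \<Longrightarrow> \<bar>h y\<bar> \<le> \<bar>h z\<bar>"
    using continuous_attains_sup[OF assms(1)] assms(6) by blast
  obtain w where "w \<in> S" "\<bar>h z\<bar> \<le> a * \<bar>h w\<bar> + c" using step[OF z] by blast
  then have "\<bar>h z\<bar> \<le> a * \<bar>h z\<bar> + c"
    using max mult_left_mono[OF max assms(3)] by fastforce
  then have "\<bar>h z\<bar> \<le> c / (1 - a)" using assms(4) by (simp add: field_simps)
  then show ?thesis using max[OF assms(6)] by linarith
qed

lemma supnorm_on_upper:
  fixes h :: "real \<Rightarrow> real"
  assumes "continuous_on {a..b} h" "x \<in> {a..b}"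
  shows "\<bar>h x\<bar> \<le> supnorm_on {a..b} h"
proof -
  have "continuous_on {a..b} (\<lambda>x. \<bar>h x\<bar>)" using assms(1) by (intro continuous_intros)
  then have "bdd_above ((\<lambda>x. \<bar>h x\<bar>) ` {a..b})"
    by (intro bounded_imp_bdd_above compact_imp_bounded compact_continuous_image) auto
  then show ?thesis unfolding supnorm_on_def by (rule cSup_upper[rotated]) (use assms(2) in auto)
qed

lemma supnorm_on_least:
  fixes h :: "real \<Rightarrow> real"
  assumes "a \<le> b" "\<And>x. x \<in> {a..b} \<Longrightarrow> \<bar>h x\<bar> \<le> B"
  shows "supnorm_on {a..b} h \<le> B"
  unfolding supnorm_on_def by (rule cSup_least) (use assms in auto)

lemma dist_on_le_if_uniformly_approximable:
  fixes f :: "real \<Rightarrow> real"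
  assumes "a \<le> b" "continuous_on {a..b} f" "A \<noteq> {}"
    and "\<And>r. r \<in> A \<Longrightarrow> continuous_on {a..b} r"
    and "\<And>s. s \<in> B \<Longrightarrow> continuous_on {a..b} s"
    and approx: "\<And>r e. r \<in> A \<Longrightarrow> e > 0 \<Longrightarrow> \<exists>s\<in>B. \<forall>x\<in>{a..b}. \<bar>r x - s x\<bar> \<le> e"
  shows "dist_on {a..b} f B \<le> dist_on {a..b} f A"
proof -
  define d where "d s = supnorm_on {a..b} (\<lambda>x. f x - s x)" for s
  have bdd: "bdd_below (d ` B)"
  proof (rule bdd_belowI)
    fix y assume "y \<in> d ` B"
    then obtain s where "s \<in> B" "y = d s" by blast
    moreover have "\<bar>f a - s a\<bar> \<le> d s" unfolding d_def
      using assms(1,2) assms(5)[OF \<open>s \<in> B\<close>] by (intro supnorm_on_upper continuous_intros) auto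
    ultimately show "0 \<le> y" by linarith
  qed
  have "Inf (d ` B) \<le> Inf (d ` A)"
  proof (rule cInf_greatest)
    fix y assume "y \<in> d ` A"
    then obtain r where r: "r \<in> A" and y: "y = d r" by blast
    show "Inf (d ` B) \<le> y"
    proof (rule field_le_epsilon)
      fix e :: real assume "e > 0"
      then obtain s where s: "s \<in> B" and close: "\<forall>x\<in>{a..b}. \<bar>r x - s x\<bar> \<le> e"
        using approx[OF r] by blast
      have "Inf (d ` B) \<le> d s" using bdd s by (intro cInf_lower) auto
      also have "\<dots> \<le> y + e" unfolding d_def
      proof (rule supnorm_on_least[OF assms(1)])
        fix x assume x: "x \<in> {a..b}"
        have "\<bar>f x - r x\<bar> \<le> y" unfolding y d_def
          using assms(2) assms(4)[OF r] x by (intro supnorm_on_upper continuous_intros)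
        then show "\<bar>f x - s x\<bar> \<le> y + e" using close x by force
      qed
      finally show "Inf (d ` B) \<le> y + e" .
    qed
  qed (use assms(3) in auto)
  then show ?thesis unfolding dist_on_def d_def .
qed

lemma continuous_on_rat_fun:
  assumes "r \<in> rat_fun xs N l m"
  shows "continuous_on (Ivl xs N) r"
proof -
  obtain p q where r: "r = (\<lambda>x. poly p x / poly q x)" and q: "\<forall>x\<in>Ivl xs N. poly q x > 0"
    using assms unfolding rat_fun_def by blast
  show ?thesis unfolding r
    by (rule continuous_on_divide) (use q in \<open>auto intro: continuous_intros\<close>)
qed

lemma rat_fun_nonempty: "rat_fun xs N l m \<noteq> {}"
proof -
  have "(\<lambda>x. poly 0 x / poly 1 x) \<in> rat_fun xs N l m"
    unfolding rat_fun_def by (rule CollectI, rule exI[of _ 0], rule exI[of _ 1]) simp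
  then show ?thesis by blast
qed

locale fractal_partition =
  fixes xs :: "nat \<Rightarrow> real" and N :: nat and \<alpha> :: "nat \<Rightarrow> real"
  assumes N_pos: "N \<ge> 1"
    and nodes_increasing: "\<forall>i<N. xs i < xs (Suc i)"
    and alpha_bounded: "\<forall>i\<in>{1..N}. \<bar>\<alpha> i\<bar> < 1"
begin

abbreviation I :: "real set" where "I \<equiv> {xs 0 .. xs N}"

lemma nodes_less: "i < j \<Longrightarrow> j \<le> N \<Longrightarrow> xs i < xs j"
  using ordered_nodes_less[OF nodes_increasing] by blast

lemma nodes_le: "i \<le> j \<Longrightarrow> j \<le> N \<Longrightarrow> xs i \<le> xs j"
  using ordered_nodes_le[OF nodes_increasing] by blast

lemma ends_less: "xs 0 < xs N"
  using nodes_less N_pos by auto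

lemma piece_subset: "i \<in> {1..N} \<Longrightarrow> {xs (i-1) .. xs i} \<subseteq> I"
  using nodes_le by auto

lemma Linv_in:
  assumes i: "i \<in> {1..N}" and x: "x \<in> {xs (i-1) .. xs i}"
  shows "Linv xs N i x \<in> I"
proof -
  define d where "d = xs i - xs (i-1)"
  define c where "c = (xs N - xs 0) / d"
  have d: "d > 0" using nodes_less[of "i-1" i] i d_def by simp
  have c: "c > 0" using ends_less d c_def by simp
  have "c * (x - xs (i-1)) \<ge> 0" using c x by simp
  moreover have "c * (x - xs (i-1)) \<le> c * d" using c x d_def by (intro mult_left_mono) auto
  moreover have "c * d = xs N - xs 0" using d c_def by simp
  ultimately show ?thesis unfolding Linv_def c_def d_def by auto
qed

lemma Linv_left: "Linv xs N i (xs (i-1)) = xs 0"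
  by (simp add: Linv_def)

lemma Linv_right: "i \<in> {1..N} \<Longrightarrow> Linv xs N i (xs i) = xs N"
  using nodes_less[of "i-1" i] by (simp add: Linv_def)

definition is_fractal :: "(real \<Rightarrow> real) \<Rightarrow> (real \<Rightarrow> real) \<Rightarrow> (real \<Rightarrow> real) \<Rightarrow> bool" where
  "is_fractal f b g \<longleftrightarrow> continuous_on I g
      \<and> (\<forall>i\<in>{1..N}. \<forall>x\<in>{xs (i - 1) .. xs i}.
           g x = f x + \<alpha> i * (g (Linv xs N i x) - b (Linv xs N i x)))
      \<and> (\<forall>x. x \<notin> I \<longrightarrow> g x = 0)"

definition alpha_max :: real where "alpha_max = Max ((\<lambda>i. \<bar>\<alpha> i\<bar>) ` {1..N})"

lemma alpha_max_ge: "i \<in> {1..N} \<Longrightarrow> \<bar>\<alpha> i\<bar> \<le> alpha_max"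
  unfolding alpha_max_def by (rule Max_ge) auto

lemma alpha_max_nonneg: "0 \<le> alpha_max"
  using alpha_max_ge[of 1] N_pos by force

lemma alpha_max_less_1: "alpha_max < 1"
proof -
  have "alpha_max \<in> (\<lambda>i. \<bar>\<alpha> i\<bar>) ` {1..N}" unfolding alpha_max_def
    by (rule Max_in) (use N_pos in auto)
  then show ?thesis using alpha_bounded by auto
qed

text \<open>At an interior node the left piece is chosen.\<close>
definition piece :: "real \<Rightarrow> nat" where
  "piece y = (LEAST i. 1 \<le> i \<and> y \<le> xs i)"

lemma piece_in:
  assumes y: "y \<in> I"
  shows "piece y \<in> {1..N}" "y \<in> {xs (piece y - 1) .. xs (piece y)}"
proof -
  have ex: "1 \<le> N \<and> y \<le> xs N" using y N_pos by auto
  have l: "1 \<le> piece y \<and> y \<le> xs (piece y)" unfolding piece_def by (rule LeastI[of _ N]) (rule ex)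
  have u: "piece y \<le> N" unfolding piece_def by (rule Least_le) (rule ex)
  show "piece y \<in> {1..N}" using l u by auto
  have "xs (piece y - 1) \<le> y"
  proof (cases "piece y = 1")
    case False
    then have "piece y - 1 < piece y" "1 \<le> piece y - 1" using l by auto
    then have "\<not> (1 \<le> piece y - 1 \<and> y \<le> xs (piece y - 1))"
      unfolding piece_def using not_less_Least by blast
    then show ?thesis using \<open>1 \<le> piece y - 1\<close> by auto
  qed (use y in simp)
  then show "y \<in> {xs (piece y - 1) .. xs (piece y)}" using l by auto
qed

lemma piece_cases:
  assumes i: "i \<in> {1..N}" and y: "y \<in> {xs (i-1) .. xs i}"
  shows "piece y = i \<or> (piece y = i - 1 \<and> y = xs (i-1) \<and> i \<ge> 2)"
proof -
  have yI: "y \<in> I" using piece_subset[OF i] y by auto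
  note p = piece_in[OF yI]
  have upper: "piece y \<le> i" unfolding piece_def by (rule Least_le) (use i y in auto)
  have lower: "piece y \<ge> i - 1"
  proof (rule ccontr)
    assume "\<not> ?thesis"
    then have "xs (piece y) < xs (i-1)" using nodes_less i by auto
    then show False using p y by auto
  qed
  show ?thesis
  proof (cases "piece y = i")
    case False
    then have "piece y = i - 1" "i \<ge> 2" using upper lower p(1) by auto
    moreover have "y = xs (i-1)" using p(2) y \<open>piece y = i - 1\<close> by auto
    ultimately show ?thesis by auto
  qed simp
qed

lemma is_fractal_at_piece:
  assumes "is_fractal f b g" "z \<in> I"
  shows "g z = f z + \<alpha> (piece z) * (g (Linv xs N (piece z) z) - b (Linv xs N (piece z) z))"
  using assms piece_in[OF assms(2)] unfolding is_fractal_def by blast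

lemma Linv_piece_in: "z \<in> I \<Longrightarrow> Linv xs N (piece z) z \<in> I"
  using Linv_in piece_in by blast

lemma alpha_piece_le: "z \<in> I \<Longrightarrow> \<bar>\<alpha> (piece z)\<bar> \<le> alpha_max"
  using alpha_max_ge piece_in by blast

lemma is_fractal_unique:
  assumes g1: "is_fractal f b g1" and g2: "is_fractal f b g2"
  shows "g1 = g2"
proof
  fix x
  show "g1 x = g2 x"
  proof (cases "x \<in> I")
    case True
    have "\<bar>g1 x - g2 x\<bar> \<le> 0 / (1 - alpha_max)"
    proof (rule abs_le_by_self_contraction[OF _ _ alpha_max_nonneg alpha_max_less_1 _ True])
      show "continuous_on I (\<lambda>x. g1 x - g2 x)"
        using g1 g2 unfolding is_fractal_def by (intro continuous_intros) auto
      fix z assume z: "z \<in> I"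
      define w where "w = Linv xs N (piece z) z"
      have "g1 z - g2 z = \<alpha> (piece z) * (g1 w - g2 w)"
        using is_fractal_at_piece[OF g1 z] is_fractal_at_piece[OF g2 z]
        by (simp add: w_def algebra_simps)
      then have "\<bar>g1 z - g2 z\<bar> \<le> alpha_max * \<bar>g1 w - g2 w\<bar>"
        by (simp add: abs_mult alpha_piece_le[OF z] mult_right_mono)
      then show "\<exists>w\<in>I. \<bar>g1 z - g2 z\<bar> \<le> alpha_max * \<bar>g1 w - g2 w\<bar> + 0"
        using Linv_piece_in[OF z] w_def by auto
    qed auto
    then show ?thesis by simp
  qed (use g1 g2 in \<open>simp add: is_fractal_def\<close>)
qed

lemma is_fractal_dist_le:
  assumes g: "is_fractal f b g" and cf: "continuous_on I f"
    and close: "\<And>x. x \<in> I \<Longrightarrow> \<bar>f x - b x\<bar> \<le> \<delta>" and x: "x \<in> I"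
  shows "\<bar>g x - f x\<bar> \<le> \<delta> / (1 - alpha_max)"
proof (rule abs_le_by_self_contraction[OF _ _ alpha_max_nonneg alpha_max_less_1 _ x])
  show "continuous_on I (\<lambda>x. g x - f x)"
    using g cf unfolding is_fractal_def by (intro continuous_intros) auto
  fix z assume z: "z \<in> I"
  define w where "w = Linv xs N (piece z) z"
  have wI: "w \<in> I" using Linv_piece_in[OF z] w_def by simp
  have "\<bar>g z - f z\<bar> = \<bar>\<alpha> (piece z)\<bar> * \<bar>(g w - f w) + (f w - b w)\<bar>"
    using is_fractal_at_piece[OF g z] by (simp add: w_def abs_mult)
  also have "\<dots> \<le> alpha_max * (\<bar>g w - f w\<bar> + \<delta>)"
    using close[OF wI] by (intro mult_mono alpha_piece_le[OF z]) (auto simp: alpha_max_nonneg)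
  also have "\<dots> \<le> alpha_max * \<bar>g w - f w\<bar> + \<delta>"
    using alpha_max_less_1 mult_right_mono[of alpha_max 1 \<delta>] close[OF x]
    by (simp add: distrib_left)
  finally show "\<exists>w\<in>I. \<bar>g z - f z\<bar> \<le> alpha_max * \<bar>g w - f w\<bar> + \<delta>" using wI by blast
qed auto

definition rb_piece :: "(real \<Rightarrow> real) \<Rightarrow> (real \<Rightarrow> real) \<Rightarrow> (real \<Rightarrow> real) \<Rightarrow> nat \<Rightarrow> real \<Rightarrow> real" where
  "rb_piece f b g i y = f y + \<alpha> i * (g (Linv xs N i y) - b (Linv xs N i y))"

text \<open>The Read--Bajraktarevic operator; its fixed points on I are exactly the fractal functions.\<close>
definition rb_operator :: "(real \<Rightarrow> real) \<Rightarrow> (real \<Rightarrow> real) \<Rightarrow> (real \<Rightarrow> real) \<Rightarrow> real \<Rightarrow> real" where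
  "rb_operator f b g y = rb_piece f b g (piece y) y"

text \<open>At an interior node both adjacent pieces give f, provided g and b interpolate f at the
  endpoints of I; this is what makes the operator well defined and continuous.\<close>
lemma rb_operator_eq_piece:
  assumes i: "i \<in> {1..N}" and y: "y \<in> {xs (i-1) .. xs i}"
    and g0: "g (xs 0) = f (xs 0)" and gN: "g (xs N) = f (xs N)"
    and b0: "b (xs 0) = f (xs 0)" and bN: "b (xs N) = f (xs N)"
  shows "rb_operator f b g y = rb_piece f b g i y"
  using piece_cases[OF i y]
proof
  assume node: "piece y = i - 1 \<and> y = xs (i - 1) \<and> 2 \<le> i"
  then have "i - 1 \<in> {1..N}" using i by auto
  then have "rb_piece f b g (i-1) y = f y" using node Linv_right gN bN by (simp add: rb_piece_def)
  moreover have "rb_piece f b g i y = f y" using node Linv_left[of i] g0 b0 by (simp add: rb_piece_def)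
  ultimately show ?thesis using node unfolding rb_operator_def by metis
qed (simp add: rb_operator_def)

lemma continuous_on_rb_piece:
  assumes "continuous_on I f" "continuous_on I b" "continuous_on I g" and i: "i \<in> {1..N}"
  shows "continuous_on {xs (i-1) .. xs i} (rb_piece f b g i)"
proof -
  have Linv: "continuous_on {xs (i-1) .. xs i} (Linv xs N i)"
    unfolding Linv_def by (intro continuous_intros)
  have image: "Linv xs N i ` {xs (i-1) .. xs i} \<subseteq> I" using Linv_in[OF i] by auto
  have "continuous_on {xs (i-1) .. xs i} (\<lambda>y. g (Linv xs N i y))"
    by (rule continuous_on_compose2[OF assms(3) Linv image])
  moreover have "continuous_on {xs (i-1) .. xs i} (\<lambda>y. b (Linv xs N i y))"
    by (rule continuous_on_compose2[OF assms(2) Linv image])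
  moreover have "continuous_on {xs (i-1) .. xs i} f"
    by (rule continuous_on_subset[OF assms(1) piece_subset[OF i]])
  ultimately show ?thesis unfolding rb_piece_def by (intro continuous_intros)
qed

lemma continuous_on_rb_operator:
  assumes "continuous_on I f" "continuous_on I b" "continuous_on I g"
    and "g (xs 0) = f (xs 0)" "g (xs N) = f (xs N)" "b (xs 0) = f (xs 0)" "b (xs N) = f (xs N)"
  shows "continuous_on I (rb_operator f b g)"
proof -
  have "continuous_on (\<Union>i\<in>{1..N}. {xs (i-1) .. xs i}) (rb_operator f b g)"
  proof (rule continuous_on_closed_Union)
    fix i assume i: "i \<in> {1..N}"
    show "continuous_on {xs (i-1) .. xs i} (rb_operator f b g)"
      using continuous_on_rb_piece[OF assms(1-3) i]
      by (rule continuous_on_cong[THEN iffD1, rotated 2])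
         (use rb_operator_eq_piece[OF i _ assms(4-7)] in auto)
  qed auto
  moreover have "I = (\<Union>i\<in>{1..N}. {xs (i-1) .. xs i})" using piece_in piece_subset by blast
  ultimately show ?thesis by simp
qed

definition clamp :: "real \<Rightarrow> real" where "clamp x = max (xs 0) (min (xs N) x)"

lemma clamp_in: "clamp x \<in> I" using ends_less by (auto simp: clamp_def)

lemma clamp_id: "x \<in> I \<Longrightarrow> clamp x = x" by (auto simp: clamp_def)

lemma comp_clamp_in_bcontfun:
  assumes "continuous_on I h"
  shows "(\<lambda>x. h (clamp x)) \<in> bcontfun"
proof -
  have "continuous_on UNIV (\<lambda>x. h (clamp x))" using clamp_in
    by (intro continuous_on_compose2[OF assms]) (auto simp: clamp_def intro!: continuous_intros)
  moreover have "bounded (h ` I)" by (intro compact_imp_bounded compact_continuous_image assms) auto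
  then have "bounded (range (\<lambda>x. h (clamp x)))" by (rule bounded_subset) (use clamp_in in auto)
  ultimately show ?thesis by (simp add: bcontfun_def)
qed

text \<open>Bounded continuous functions on the line stand in for C(I), via extension by clamping.\<close>
definition rb_bcontfun :: "(real \<Rightarrow> real) \<Rightarrow> (real \<Rightarrow> real) \<Rightarrow> (real \<Rightarrow>\<^sub>C real) \<Rightarrow> (real \<Rightarrow>\<^sub>C real)" where
  "rb_bcontfun f b G = Bcontfun (\<lambda>x. rb_operator f b G (clamp x))"

definition interpolating :: "(real \<Rightarrow> real) \<Rightarrow> (real \<Rightarrow>\<^sub>C real) set" where
  "interpolating f = {G. apply_bcontfun G (xs 0) = f (xs 0) \<and> apply_bcontfun G (xs N) = f (xs N)}"

lemma complete_interpolating: "complete (interpolating f)"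
proof -
  have "interpolating f = PiC {xs 0, xs N} (\<lambda>y. {f y})"
    by (auto simp: interpolating_def mem_PiC_iff)
  then show ?thesis unfolding complete_eq_closed by (simp add: closed_PiC)
qed

lemma apply_rb_bcontfun:
  assumes "continuous_on I f" "continuous_on I b" "b (xs 0) = f (xs 0)" "b (xs N) = f (xs N)"
    and "G \<in> interpolating f"
  shows "apply_bcontfun (rb_bcontfun f b G) = (\<lambda>x. rb_operator f b G (clamp x))"
  unfolding rb_bcontfun_def using assms
  by (intro Bcontfun_inverse comp_clamp_in_bcontfun continuous_on_rb_operator)
     (auto simp: interpolating_def)

lemma rb_bcontfun_interpolating:
  assumes "continuous_on I f" "continuous_on I b" and b0: "b (xs 0) = f (xs 0)" and bN: "b (xs N) = f (xs N)"
    and G: "G \<in> interpolating f"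
  shows "rb_bcontfun f b G \<in> interpolating f"
proof -
  have g0: "G (xs 0) = f (xs 0)" and gN: "G (xs N) = f (xs N)" using G by (auto simp: interpolating_def)
  have "rb_operator f b G (xs 0) = rb_piece f b G 1 (xs 0)"
    by (rule rb_operator_eq_piece) (use N_pos ends_less g0 gN b0 bN nodes_le[of 0 1] in auto)
  also have "\<dots> = f (xs 0)" using Linv_left[of 1] g0 b0 by (simp add: rb_piece_def)
  finally have "rb_operator f b G (xs 0) = f (xs 0)" .
  moreover have "rb_operator f b G (xs N) = rb_piece f b G N (xs N)"
    by (rule rb_operator_eq_piece) (use N_pos ends_less g0 gN b0 bN nodes_le[of "N-1" N] in auto)
  moreover have "rb_piece f b G N (xs N) = f (xs N)"
    using Linv_right[of N] N_pos gN bN by (simp add: rb_piece_def)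
  ultimately show ?thesis using apply_rb_bcontfun[OF assms] ends_less
    by (simp add: interpolating_def clamp_id)
qed

lemma rb_bcontfun_contraction:
  assumes "continuous_on I f" "continuous_on I b" "b (xs 0) = f (xs 0)" "b (xs N) = f (xs N)"
    and G: "G \<in> interpolating f" and H: "H \<in> interpolating f"
  shows "dist (rb_bcontfun f b G) (rb_bcontfun f b H) \<le> alpha_max * dist G H"
proof (rule dist_bound)
  fix x
  define y where "y = clamp x"
  define z where "z = Linv xs N (piece y) y"
  have "dist (rb_bcontfun f b G x) (rb_bcontfun f b H x) = \<bar>\<alpha> (piece y)\<bar> * dist (G z) (H z)"
    using apply_rb_bcontfun[OF assms(1-4) G] apply_rb_bcontfun[OF assms(1-4) H]
    by (simp add: rb_operator_def rb_piece_def dist_real_def y_def z_def abs_mult flip: right_diff_distrib)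
  also have "\<dots> \<le> alpha_max * dist G H"
    using clamp_in y_def by (intro mult_mono alpha_piece_le dist_bounded) (auto simp: alpha_max_nonneg)
  finally show "dist (rb_bcontfun f b G x) (rb_bcontfun f b H x) \<le> alpha_max * dist G H" .
qed

lemma is_fractal_exists:
  assumes cf: "continuous_on I f" and cb: "continuous_on I b"
    and b0: "b (xs 0) = f (xs 0)" and bN: "b (xs N) = f (xs N)"
  shows "\<exists>g. is_fractal f b g"
proof -
  have "Bcontfun (\<lambda>x. f (clamp x)) \<in> interpolating f"
    using Bcontfun_inverse[OF comp_clamp_in_bcontfun[OF cf]] ends_less
    by (simp add: interpolating_def clamp_id)
  then obtain G where G: "G \<in> interpolating f" and fixed: "rb_bcontfun f b G = G"
    using Banach_fix[OF complete_interpolating _ alpha_max_nonneg alpha_max_less_1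
        _ rb_bcontfun_contraction[OF assms]] rb_bcontfun_interpolating[OF assms]
    by blast
  define g where "g x = (if x \<in> I then apply_bcontfun G x else 0)" for x
  have g0: "G (xs 0) = f (xs 0)" and gN: "G (xs N) = f (xs N)" using G by (auto simp: interpolating_def)
  have "continuous_on I g"
    by (rule continuous_on_cong[THEN iffD1, OF refl _ continuous_on_apply_bcontfun[of I G]])
       (simp add: g_def)
  moreover have "g x = f x + \<alpha> i * (g (Linv xs N i x) - b (Linv xs N i x))"
    if i: "i \<in> {1..N}" and x: "x \<in> {xs (i - 1) .. xs i}" for i x
  proof -
    have xI: "x \<in> I" using piece_subset[OF i] x by auto
    have "g x = rb_operator f b G x"
      using fixed apply_rb_bcontfun[OF assms G] xI by (metis g_def clamp_id)
    also have "\<dots> = rb_piece f b G i x" by (rule rb_operator_eq_piece[OF i x g0 gN b0 bN])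
    also have "\<dots> = f x + \<alpha> i * (g (Linv xs N i x) - b (Linv xs N i x))"
      using Linv_in[OF i x] by (simp add: rb_piece_def g_def)
    finally show ?thesis .
  qed
  ultimately show ?thesis unfolding is_fractal_def g_def by auto
qed

lemma is_fractal_fractal:
  assumes "continuous_on I f" "continuous_on I b" "b (xs 0) = f (xs 0)" "b (xs N) = f (xs N)"
  shows "is_fractal f b (fractal xs N \<alpha> b f)"
proof -
  have "\<exists>!g. is_fractal f b g"
    using is_fractal_exists[OF assms] is_fractal_unique by blast
  moreover have "fractal xs N \<alpha> b f = (THE g. is_fractal f b g)"
    unfolding fractal_def is_fractal_def Ivl_def ..
  ultimately show ?thesis using theI' by metis
qed

lemma is_fractal_fractal_op:
  assumes "continuous_on I r" and "n \<ge> 1"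
  shows "is_fractal r (bernstein xs N n r) (fractal_op xs N \<alpha> n r)"
  unfolding fractal_op_def
  using assms ends_less
  by (intro is_fractal_fractal continuous_on_bernstein bernstein_endpoints) auto

lemma fractal_op_uniform_approx:
  assumes cr: "continuous_on I r" and e: "e > 0"
  obtains n where "n \<ge> 1" "\<And>x. x \<in> I \<Longrightarrow> \<bar>r x - fractal_op xs N \<alpha> n r x\<bar> \<le> e"
proof -
  define \<delta> where "\<delta> = e * (1 - alpha_max)"
  have "\<delta> > 0" using e alpha_max_less_1 by (simp add: \<delta>_def)
  then obtain M where M: "\<And>n x. M \<le> n \<Longrightarrow> x \<in> I \<Longrightarrow> \<bar>r x - bernstein xs N n r x\<bar> < \<delta>"
    using bernstein_uniform_approx[OF ends_less cr] by blast
  define n where "n = max M 1"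
  have n: "n \<ge> 1" "M \<le> n" by (auto simp: n_def)
  show ?thesis
  proof (rule that[OF n(1)])
    fix x assume x: "x \<in> I"
    have "\<bar>fractal_op xs N \<alpha> n r x - r x\<bar> \<le> \<delta> / (1 - alpha_max)"
      using M[OF n(2)]
      by (intro is_fractal_dist_le[OF is_fractal_fractal_op[OF cr n(1)] cr _ x] less_imp_le)
    also have "\<dots> = e" using alpha_max_less_1 by (simp add: \<delta>_def)
    finally show "\<bar>r x - fractal_op xs N \<alpha> n r x\<bar> \<le> e" by linarith
  qed
qed

end

theorem theorem3p9:
  fixes xs :: "nat \<Rightarrow> real" and N :: nat and \<alpha> :: "nat \<Rightarrow> real"
    and f :: "real \<Rightarrow> real" and l m :: nat
  assumes "N \<ge> 2"
    and "\<forall>i<N. xs i < xs (Suc i)"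
    and "\<forall>i\<in>{1..N}. \<bar>\<alpha> i\<bar> < 1"
    and "continuous_on (Ivl xs N) f"
  shows "dist_on (Ivl xs N) f (frac_rat_fun xs N \<alpha> l m)
           \<le> dist_on (Ivl xs N) f (rat_fun xs N l m)"
proof -
  interpret fractal_partition xs N \<alpha> using assms by unfold_locales auto
  have continuous_fractal: "continuous_on I s" if "s \<in> frac_rat_fun xs N \<alpha> l m" for s
    using that continuous_on_rat_fun is_fractal_fractal_op
    unfolding frac_rat_fun_def is_fractal_def Ivl_def by blast
  have approx: "\<exists>s\<in>frac_rat_fun xs N \<alpha> l m. \<forall>x\<in>I. \<bar>r x - s x\<bar> \<le> e"
    if r: "r \<in> rat_fun xs N l m" and "e > 0" for r e
  proof -
    obtain n where "n \<ge> 1" "\<And>x. x \<in> I \<Longrightarrow> \<bar>r x - fractal_op xs N \<alpha> n r x\<bar> \<le> e"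
      using fractal_op_uniform_approx continuous_on_rat_fun[OF r] \<open>e > 0\<close> by (metis Ivl_def)
    then show ?thesis using r unfolding frac_rat_fun_def by blast
  qed
  show ?thesis unfolding Ivl_def
    using ends_less assms(4) rat_fun_nonempty continuous_on_rat_fun continuous_fractal approx
    by (intro dist_on_le_if_uniformly_approximable) (auto simp: Ivl_def)
qed

end
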